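(* If a system $C=(1,c_2,c_3,c_4,c_5,c_6)$ is canonical and its subsystem $(1,c_2,c_3,c_4,c_5)$ is noncanonical, then $c_6\ne 2c_5-c_4$.
   Context: A system is a tuple $C=(c_1,\dots,c_n)$ of integers with $1=c_1<c_2<\dots<c_n$; for $k\le n$, $(c_1,\dots,c_k)$ is a subsystem. For a positive integer $v$, $\mathrm{opt}_C(v)$ is the minimum of $\sum_i x_i$ over $x\in\mathbb{Z}_{\ge0}^n$ with $\sum_i c_ix_i=v$. The greedy representation of $v$ is produced by: for $i=n$ down to $1$, while $c_i\le$ remaining value, take a coin $c_i$. $\mathrm{grd}_C(v)$ is its number of coins. A positive integer $w$ is a counterexample if $\mathrm{opt}_C(w)<\mathrm{grd}_C(w)$; $C$ is canonical if it has none, noncanonical otherwise. *)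

theory Defs
  imports Main
begin

definition is_system :: "nat list \<Rightarrow> bool" where
  "is_system C \<longleftrightarrow> C \<noteq> [] \<and> hd C = 1 \<and> sorted_wrt (<) C"

definition representations :: "nat list \<Rightarrow> nat \<Rightarrow> nat list set" where
  "representations C v = {x. length x = length C \<and> (\<Sum>i<length C. C ! i * x ! i) = v}"

definition opt :: "nat list \<Rightarrow> nat \<Rightarrow> nat" where
  "opt C v = (LEAST k. \<exists>x \<in> representations C v. sum_list x = k)"

fun grd_desc :: "nat list \<Rightarrow> nat \<Rightarrow> nat" where
  "grd_desc [] v = 0"
| "grd_desc (c # cs) v = (if c = 0 then grd_desc cs v else v div c + grd_desc cs (v mod c))"

definition grd :: "nat list \<Rightarrow> nat \<Rightarrow> nat" where
  "grd C v = grd_desc (rev C) v"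

definition counterexample :: "nat list \<Rightarrow> nat \<Rightarrow> bool" where
  "counterexample C w \<longleftrightarrow> w > 0 \<and> opt C w < grd C w"

definition canonical :: "nat list \<Rightarrow> bool" where
  "canonical C \<longleftrightarrow> (\<forall>w. \<not> counterexample C w)"

end

theory Submission
  imports Defs
begin

(* Let w be the least counterexample of C5 = (1,c2,c3,c4,c5) and suppose d = c5 - c4 = c6 - c5.
   Since C6 is canonical, w >= c6; and for every coin b > d of C5 the value c5 + b, paid with two
   coins but started by greedy with c6, shows that b - d is again a coin of C5.
   Greedy pays w with c5 first and is optimal below w, hence opt w <= opt (w - c5). So a coin a of
   an optimal representation of w satisfies a < c5 and w - a < c5, i.e. v = w - c5 lies in [d, a).
   It now suffices to find a coin beta <= v with grd (w - a) = 1 + grd (v - beta), because then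
   opt v <= 1 + grd (v - beta) = opt (w - a) = opt w - 1, contradicting opt w <= opt v.
   Such a beta is found by walking down the chain of coins a, a - d, a - 2d, ... until it drops
   to at most v; with five coins the chain is short and each case is settled directly. *)

lemma system_coin_pos: "is_system C \<Longrightarrow> c \<in> set C \<Longrightarrow> 0 < c"
  by (cases C) (auto simp: is_system_def)

lemma system_one_mem: "is_system C \<Longrightarrow> 1 \<in> set C"
  by (cases C) (auto simp: is_system_def)

lemma system_coin_le_last:
  assumes sys: "is_system C" and c: "c \<in> set C"
  shows "c \<le> last C"
proof -
  have "C = butlast C @ [last C]"
    using sys by (simp add: is_system_def)
  moreover have "c \<in> set (butlast C) \<or> c = last C"
    using c by (subst (asm) calculation) auto
  ultimately show ?thesis
    using sys sorted_wrt_append[of "(<)" "butlast C" "[last C]"]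
    by (auto simp: is_system_def intro: less_imp_le)
qed

lemma is_system_butlast: "is_system (C @ [c]) \<Longrightarrow> C \<noteq> [] \<Longrightarrow> is_system C"
  by (cases C) (auto simp: is_system_def sorted_wrt_append)

lemma opt_le: "x \<in> representations C v \<Longrightarrow> opt C v \<le> sum_list x"
  unfolding opt_def by (rule Least_le) blast

lemma opt_attained:
  assumes "x \<in> representations C v"
  obtains y where "y \<in> representations C v" "sum_list y = opt C v"
proof -
  have "\<exists>k. \<exists>y\<in>representations C v. sum_list y = k"
    using assms by blast
  then have "\<exists>y\<in>representations C v. sum_list y = opt C v"
    unfolding opt_def by (rule LeastI_ex)
  then show thesis
    using that by blast
qed

lemma single_coin_representation:
  assumes "i < length C"
  shows "(replicate (length C) 0)[i := k] \<in> representations C (C ! i * k)"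
proof -
  have "(\<Sum>j<length C. C ! j * (replicate (length C) 0)[i := k] ! j)
      = (\<Sum>j<length C. if j = i then C ! i * k else 0)"
    by (rule sum.cong) (auto simp: nth_list_update)
  then show ?thesis
    using assms by (simp add: representations_def)
qed

lemma sum_list_single_coin: "i < n \<Longrightarrow> sum_list ((replicate n 0)[i := k]) = (k::nat)"
  by (simp add: sum_list_update)

lemma representations_add:
  assumes "x \<in> representations C u" "y \<in> representations C v"
  shows "map2 (+) x y \<in> representations C (u + v)"
    and "sum_list (map2 (+) x y) = sum_list x + sum_list y"
proof -
  have len: "length x = length C" "length y = length C"
    using assms by (auto simp: representations_def)
  have "(\<Sum>i<length C. C ! i * map2 (+) x y ! i)
      = (\<Sum>i<length C. C ! i * x ! i) + (\<Sum>i<length C. C ! i * y ! i)"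
    using len by (simp add: distrib_left sum.distrib)
  then show "map2 (+) x y \<in> representations C (u + v)"
    using assms len by (simp add: representations_def)
  show "sum_list (map2 (+) x y) = sum_list x + sum_list y"
    using len by (simp add: sum_list_sum_nth sum.distrib atLeast0LessThan)
qed

lemma representations_remove_coin:
  assumes "x \<in> representations C v" "i < length C" "0 < x ! i"
  shows "C ! i \<le> v"
    and "x[i := x ! i - 1] \<in> representations C (v - C ! i)"
    and "sum_list (x[i := x ! i - 1]) = sum_list x - 1"
proof -
  let ?y = "x[i := x ! i - 1]"
  have len: "length x = length C"
    using assms by (simp add: representations_def)
  have "(\<Sum>j<length C. C ! j * x ! j) = (\<Sum>j<length C. C ! j * ?y ! j + (if j = i then C ! i else 0))"
    using assms(3) by (intro sum.cong) (auto simp: nth_list_update len algebra_simps)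
  then have v: "v = (\<Sum>j<length C. C ! j * ?y ! j) + C ! i"
    using assms(1,2) by (simp add: representations_def sum.distrib)
  then show "C ! i \<le> v"
    by simp
  show "?y \<in> representations C (v - C ! i)"
    using v len by (simp add: representations_def)
  show "sum_list ?y = sum_list x - 1"
    using assms(2,3) len by (simp add: sum_list_update)
qed

lemma representation_by_ones:
  assumes "is_system C"
  shows "(replicate (length C) 0)[0 := v] \<in> representations C v"
proof -
  have "C \<noteq> []" "C ! 0 = 1"
    using assms by (auto simp: is_system_def hd_conv_nth)
  then show ?thesis
    using single_coin_representation[of 0 C v] by simp
qed

lemma opt_zero: "opt C 0 = 0"
  using opt_le[of "replicate (length C) 0" C 0] by (simp add: representations_def sum_list_replicate)

lemma opt_add_le:
  assumes "is_system C"
  shows "opt C (u + v) \<le> opt C u + opt C v"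
proof -
  obtain x y where "x \<in> representations C u" "sum_list x = opt C u"
    "y \<in> representations C v" "sum_list y = opt C v"
    using opt_attained representation_by_ones[OF assms] by metis
  then show ?thesis
    using opt_le representations_add by metis
qed

lemma opt_coin_le: "c \<in> set C \<Longrightarrow> opt C c \<le> 1"
  using opt_le single_coin_representation sum_list_single_coin
  by (metis in_set_conv_nth nat_mult_1_right)

lemma opt_remove_coin:
  assumes "is_system C" "0 < v"
  obtains c where "c \<in> set C" "c \<le> v" "opt C (v - c) + 1 = opt C v"
proof -
  obtain x where x: "x \<in> representations C v" "sum_list x = opt C v"
    using opt_attained representation_by_ones[OF assms(1)] by metis
  have "\<exists>i<length C. 0 < x ! i"
  proof (rule ccontr)
    assume "\<not> ?thesis"
    then show False
      using x(1) assms(2) by (simp add: representations_def)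
  qed
  then obtain i where i: "i < length C" "0 < x ! i"
    by blast
  note y = representations_remove_coin[OF x(1) i]
  have "opt C (v - C ! i) + 1 = opt C v"
  proof (rule antisym)
    have "0 < opt C v"
      using i x elem_le_sum_list[of i x] by (simp add: representations_def)
    then show "opt C (v - C ! i) + 1 \<le> opt C v"
      using opt_le[OF y(2)] y(3) x(2) by simp
    show "opt C v \<le> opt C (v - C ! i) + 1"
      using opt_add_le[OF assms(1), of "v - C ! i" "C ! i"] opt_coin_le[of "C ! i" C] i y(1)
      by simp
  qed
  then show thesis
    using that i y(1) by (metis nth_mem)
qed

lemma opt_append_le:
  assumes "is_system C"
  shows "opt (C @ [c]) v \<le> opt C v"
proof -
  obtain x where x: "x \<in> representations C v" "sum_list x = opt C v"
    using opt_attained representation_by_ones[OF assms] by metis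
  then have "x @ [0] \<in> representations (C @ [c]) v"
    by (simp add: representations_def nth_append)
  then show ?thesis
    using opt_le x(2) by fastforce
qed

lemma grd_desc_zero: "grd_desc cs 0 = 0"
  by (induction cs) auto

lemma grd_desc_skip: "(\<And>b. b \<in> set bs \<Longrightarrow> v < b) \<Longrightarrow> grd_desc (bs @ cs) v = grd_desc cs v"
  by (induction bs) auto

lemma grd_append_less: "v < c \<Longrightarrow> grd (C @ [c]) v = grd C v"
  using grd_desc_skip[of "[c]" v "rev C"] by (simp add: grd_def)

lemma grd_largest_coin:
  assumes "sorted_wrt (<) C" "c \<in> set C" "0 < c" "c \<le> v"
    and largest: "\<And>c'. c' \<in> set C \<Longrightarrow> c' \<le> v \<Longrightarrow> c' \<le> c"
  shows "grd C v = 1 + grd C (v - c)"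
proof -
  obtain A B where C: "C = A @ c # B"
    using split_list[OF assms(2)] by blast
  have "v < b" if "b \<in> set B" for b
    using that largest[of b] assms(1) unfolding C by (force simp: sorted_wrt_append)
  then have skip: "grd C u = grd_desc (c # rev A) u" if "u \<le> v" for u
    using that grd_desc_skip[of "rev B" u "c # rev A"] by (force simp: grd_def C)
  show ?thesis
    using skip[of v] skip[of "v - c"] assms(3,4) by (simp add: le_div_geq le_mod_geq)
qed

lemma grd_desc_eq_zero: "1 \<in> set cs \<Longrightarrow> grd_desc cs v = 0 \<Longrightarrow> v = 0"
  by (induction cs arbitrary: v) (auto simp: div_eq_0_iff split: if_splits)

lemma grd_desc_le_one: "1 \<in> set cs \<Longrightarrow> grd_desc cs v \<le> 1 \<Longrightarrow> v = 0 \<or> v \<in> set cs"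
proof (induction cs arbitrary: v)
  case (Cons c cs)
  show ?case
  proof (cases "c = 0 \<or> v < c")
    case True
    then have "grd_desc (c # cs) v = grd_desc cs v"
      by auto
    then show ?thesis
      using Cons.IH[of v] Cons.prems True by (cases "c = 1") auto
  next
    case False
    then have "0 < v div c"
      by (simp add: div_greater_zero_iff)
    then have "grd_desc cs (v mod c) = 0 \<and> v div c = 1"
      using Cons.prems(2) False by simp
    moreover have "v mod c = 0"
      using Cons.prems(1) grd_desc_eq_zero calculation by (cases "c = 1") auto
    ultimately have "v = c"
      using div_mult_mod_eq[of v c] by simp
    then show ?thesis
      by simp
  qed
qed simp

lemma grd_le_one: "is_system C \<Longrightarrow> grd C v \<le> 1 \<Longrightarrow> v = 0 \<or> v \<in> set C"
  using grd_desc_le_one[of "rev C" v] system_one_mem by (simp add: grd_def)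

lemma opt_le_grd:
  assumes "is_system C"
  shows "opt C v \<le> grd C v"
proof (induction v rule: less_induct)
  case (less v)
  show ?case
  proof (cases "v = 0")
    case True
    then show ?thesis
      by (simp add: opt_zero)
  next
    case False
    define c where "c = Max {c \<in> set C. c \<le> v}"
    have fin: "finite {c \<in> set C. c \<le> v}" and one: "1 \<in> {c \<in> set C. c \<le> v}"
      using False system_one_mem[OF assms] by auto
    then have c: "c \<in> set C" "c \<le> v" "\<And>c'. c' \<in> set C \<Longrightarrow> c' \<le> v \<Longrightarrow> c' \<le> c"
      unfolding c_def using Max_in[OF fin] Max_ge[OF fin] by blast+
    have "0 < c"
      using system_coin_pos[OF assms c(1)] .
    have "opt C v \<le> opt C c + opt C (v - c)"
      using opt_add_le[OF assms, of c "v - c"] c(2) by simp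
    also have "\<dots> \<le> 1 + grd C (v - c)"
      using opt_coin_le[OF c(1)] less[of "v - c"] \<open>0 < c\<close> c(2) False by simp
    also have "\<dots> = grd C v"
      using grd_largest_coin[of C c v] assms c \<open>0 < c\<close> by (simp add: is_system_def)
    finally show ?thesis .
  qed
qed

lemma canonical_grd_le_opt: "canonical C \<Longrightarrow> 0 < v \<Longrightarrow> grd C v \<le> opt C v"
  unfolding canonical_def counterexample_def by (meson not_less)

lemma counterexample_ge_appended_coin:
  assumes "is_system C" "canonical (C @ [c])" "counterexample C w"
  shows "c \<le> w"
proof (rule ccontr)
  assume "\<not> c \<le> w"
  then have "grd (C @ [c]) w = grd C w"
    by (simp add: grd_append_less)
  moreover have "opt (C @ [c]) w \<le> opt C w"
    using opt_append_le[OF assms(1)] .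
  ultimately have "counterexample (C @ [c]) w"
    using assms(3) by (auto simp: counterexample_def)
  then show False
    using assms(2) by (simp add: canonical_def)
qed

lemma canonical_append_sum_minus_coin:
  assumes sys: "is_system (C @ [c])" and can: "canonical (C @ [c])"
    and coins: "a \<in> set C" "b \<in> set C" and "c \<le> a + b"
  shows "a + b - c = 0 \<or> a + b - c \<in> set C"
proof -
  have "C \<noteq> []"
    using coins by auto
  then have sysC: "is_system C"
    using is_system_butlast[OF sys] by blast
  have less: "a < c" "b < c"
    using coins sys by (auto simp: is_system_def sorted_wrt_append)
  have "opt (C @ [c]) (a + b) \<le> 2"
    using opt_add_le[OF sys, of a b] opt_coin_le[of a "C @ [c]"] opt_coin_le[of b "C @ [c]"] coins
    by simp
  moreover have "grd (C @ [c]) (a + b) = 1 + grd C (a + b - c)"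
  proof -
    have "grd (C @ [c]) (a + b) = 1 + grd (C @ [c]) (a + b - c)"
      using sys assms(5) system_coin_pos[OF sys, of c] system_coin_le_last[OF sys]
      by (intro grd_largest_coin) (auto simp: is_system_def)
    then show ?thesis
      using less by (simp add: grd_append_less)
  qed
  moreover have "grd (C @ [c]) (a + b) \<le> opt (C @ [c]) (a + b)"
    using assms(5) system_coin_pos[OF sys, of c] by (intro canonical_grd_le_opt[OF can]) auto
  ultimately have "grd C (a + b - c) \<le> 1"
    by simp
  then show ?thesis
    using grd_le_one[OF sysC] by blast
qed

lemma canonical_append_coin_shift:
  assumes "is_system (C @ [c])" "canonical (C @ [c])"
    and "b \<in> set C" "c - last C < b"
  shows "b - (c - last C) \<in> set C"
proof -
  have "C \<noteq> []"
    using assms(3) by auto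
  then have "last C \<in> set C" "last C < c"
    using assms(1) sorted_wrt_append[of "(<)" C "[c]"] by (auto simp: is_system_def)
  then have "last C + b - c = 0 \<or> last C + b - c \<in> set C"
    using assms by (intro canonical_append_sum_minus_coin) auto
  moreover have "b - (c - last C) = last C + b - c"
    using \<open>last C < c\<close> by arith
  ultimately show ?thesis
    using assms(4) by auto
qed

locale least_counterexample =
  fixes C :: "nat list" and w :: nat
  assumes system: "is_system C"
    and counterexample: "counterexample C w"
    and below: "\<And>u. u < w \<Longrightarrow> \<not> counterexample C u"
begin

lemma opt_eq_grd_below: "u < w \<Longrightarrow> opt C u = grd C u"
  using below[of u] opt_le_grd[OF system, of u]
  by (cases "u = 0") (auto simp: counterexample_def opt_zero grd_def grd_desc_zero)

lemma greedy_top_coin: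
  assumes "last C \<le> v"
  shows "grd C v = 1 + grd C (v - last C)"
  using system assms system_coin_le_last[OF system] system_coin_pos[OF system, of "last C"]
  by (intro grd_largest_coin) (auto simp: is_system_def)

lemma opt_le_opt_minus_top_coin:
  assumes "last C \<le> w"
  shows "opt C w \<le> opt C (w - last C)"
proof -
  have "0 < last C"
    using system system_coin_pos by (simp add: is_system_def)
  then have "grd C w = 1 + opt C (w - last C)"
    using greedy_top_coin[OF assms] opt_eq_grd_below[of "w - last C"] assms counterexample
    by (simp add: counterexample_def)
  then show ?thesis
    using counterexample by (simp add: counterexample_def)
qed

context
  fixes a :: nat
  assumes a: "a \<in> set C" "opt C (w - a) + 1 = opt C w"
    and top_le: "last C \<le> w"
begin

lemma optimal_coin_less_top: "a < last C"
proof -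
  have "a \<noteq> last C"
    using a(2) opt_le_opt_minus_top_coin[OF top_le] by auto
  then show ?thesis
    using system_coin_le_last[OF system a(1)] by simp
qed

lemma opt_eq_grd_minus_optimal_coin: "opt C (w - a) = grd C (w - a)"
  using system_coin_pos[OF system a(1)] counterexample
  by (intro opt_eq_grd_below) (simp add: counterexample_def)

lemma grd_minus_optimal_coin_le:
  assumes "\<beta> \<in> set C" "\<beta> \<le> w - last C"
  shows "grd C (w - a) \<le> grd C (w - last C - \<beta>)"
proof -
  have "opt C (w - last C) = opt C (\<beta> + (w - last C - \<beta>))"
    by (simp only: le_add_diff_inverse[OF assms(2)])
  also have "\<dots> \<le> opt C \<beta> + opt C (w - last C - \<beta>)"
    by (rule opt_add_le[OF system])
  also have "\<dots> \<le> 1 + grd C (w - last C - \<beta>)"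
    using opt_coin_le[OF assms(1)] opt_le_grd[OF system] add_mono by blast
  finally show ?thesis
    using opt_le_opt_minus_top_coin[OF top_le] a(2) opt_eq_grd_minus_optimal_coin by simp
qed

lemma minus_optimal_coin_less_top: "w - a < last C"
proof (rule ccontr)
  assume "\<not> w - a < last C"
  then have "grd C (w - a) = 1 + grd C (w - a - last C)"
    by (intro greedy_top_coin) simp
  moreover have "a \<le> w - last C"
    using \<open>\<not> w - a < last C\<close> optimal_coin_less_top by arith
  then have "grd C (w - a) \<le> grd C (w - last C - a)"
    by (rule grd_minus_optimal_coin_le[OF a(1)])
  ultimately show False
    by (simp add: add.commute)
qed

end

end

locale five_coin_shift =
  fixes c2 c3 c4 c5 d v :: nat
  assumes sorted: "1 < c2" "c2 < c3" "c3 < c4" "c4 < c5"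
    and c5_eq: "c5 = c4 + d" and shift_le: "d \<le> v"
    and shift: "\<And>b. b \<in> set [1, c2, c3, c4, c5] \<Longrightarrow> v < b \<Longrightarrow> b - d \<in> set [1, c2, c3, c4, c5]"
begin

abbreviation coins :: "nat list" where "coins \<equiv> [1, c2, c3, c4, c5]"

lemma coins_system: "is_system coins"
  using sorted by (simp add: is_system_def)

lemma coin_pos: "c \<in> set coins \<Longrightarrow> 0 < c"
  using system_coin_pos[OF coins_system] .

lemma grd_coins_plus:
  assumes "\<gamma> \<in> set coins" "\<And>c. c \<in> set coins \<Longrightarrow> c \<le> \<gamma> + r \<Longrightarrow> c \<le> \<gamma>"
  shows "grd coins (\<gamma> + r) = 1 + grd coins r"
  using grd_largest_coin[of coins \<gamma> "\<gamma> + r"] coins_system assms coin_pos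
  by (simp add: is_system_def)

lemma c4_minus_d_eq_c3:
  assumes b: "b \<in> set coins" "b + d \<in> set coins" and "b + 2 * d \<le> c4" "v < b + d"
  shows "c4 - d = c3"
proof -
  have "c4 - d \<in> set coins"
    using shift[of c4] assms sorted c5_eq by simp
  moreover have "c4 - d < c4"
    using sorted c5_eq by simp
  ultimately consider "c4 - d = 1" | "c4 - d = c2" | "c4 - d = c3"
    using sorted by auto
  then show ?thesis
  proof cases
    case 1
    then show ?thesis
      using assms(3) coin_pos[OF b(1)] sorted(4) c5_eq by arith
  next
    case 2
    then have "b + d = c2" "b = 1"
      using assms sorted c5_eq coin_pos[OF b(1)] by auto
    then have "c3 - d \<in> set coins"
      using shift[of c3] assms sorted c5_eq by simp
    then show ?thesis
      using 2 \<open>b + d = c2\<close> \<open>b = 1\<close> sorted c5_eq by auto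
  qed
qed

lemma greedy_match:
  assumes a: "a \<in> set coins" "a < c5" "v < a"
  obtains \<beta> where "\<beta> \<in> set coins" "\<beta> \<le> v" "grd coins (c5 + v - a) = 1 + grd coins (v - \<beta>)"
proof -
  have "0 < d" "a \<le> c4"
    using sorted c5_eq a by auto
  define b1 where "b1 = a - d"
  have b1: "b1 \<in> set coins" "a = b1 + d"
    using shift[OF a(1)] a(3) shift_le unfolding b1_def by auto
  show thesis
  proof (cases "b1 \<le> v")
    case True
    have "v - b1 < d"
      using a(3) b1(2) \<open>0 < d\<close> by simp
    then have "grd coins (c4 + (v - b1)) = 1 + grd coins (v - b1)"
      using sorted c5_eq by (intro grd_coins_plus) auto
    moreover have "c5 + v - a = c4 + (v - b1)"
      using True b1(2) sorted c5_eq by simp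
    ultimately show thesis
      using that b1(1) True by simp
  next
    case b1_gt: False
    define b2 where "b2 = b1 - d"
    have b2: "b2 \<in> set coins" "b1 = b2 + d"
      using shift[OF b1(1)] b1_gt shift_le unfolding b2_def by auto
    show thesis
    proof (cases "b2 \<le> v")
      case True
      have c3: "c4 - d = c3"
        using c4_minus_d_eq_c3[of b2] b1 b2 b1_gt \<open>a \<le> c4\<close> by simp
      have "v - b2 < d"
        using b1_gt b2(2) \<open>0 < d\<close> by simp
      then have "grd coins (c3 + (v - b2)) = 1 + grd coins (v - b2)"
        using c3 sorted c5_eq by (intro grd_coins_plus) auto
      moreover have "c5 + v - a = c3 + (v - b2)"
        using True b1(2) b2(2) c3 sorted c5_eq by simp
      ultimately show thesis
        using that b2(1) True by simp
    next
      case False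
      then have "b2 - d \<in> set coins"
        using shift[OF b2(1)] shift_le by simp
      then have chain: "b2 - d = 1" "b2 = c2" "b1 = c3" "a = c4"
        using b1 b2 a \<open>a \<le> c4\<close> False shift_le sorted c5_eq by auto
      then have "v = d"
        using False shift_le by simp
      have "grd coins (c2 + (v - 1)) = 1 + grd coins (v - 1)"
        using chain b1 b2 \<open>v = d\<close> sorted c5_eq by (intro grd_coins_plus) auto
      moreover have "c5 + v - a = c2 + (v - 1)"
        using chain b1 b2 \<open>v = d\<close> sorted c5_eq by simp
      ultimately show thesis
        using that[of 1] \<open>0 < d\<close> \<open>v = d\<close> by simp
    qed
  qed
qed

end

theorem lemma6:
  fixes c2 c3 c4 c5 c6 :: nat
  assumes "is_system [1, c2, c3, c4, c5, c6]"
    and "canonical [1, c2, c3, c4, c5, c6]"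
    and "\<not> canonical [1, c2, c3, c4, c5]"
  shows "int c6 \<noteq> 2 * int c5 - int c4"
proof
  assume "int c6 = 2 * int c5 - int c4"
  moreover have sorted: "1 < c2" "c2 < c3" "c3 < c4" "c4 < c5"
    using assms(1) by (auto simp: is_system_def)
  ultimately have c6: "c6 = c5 + (c5 - c4)"
    by linarith
  define C where "C = [1, c2, c3, c4, c5]"
  have sys: "is_system C" and sys6: "is_system (C @ [c6])" and can: "canonical (C @ [c6])"
    and last: "last C = c5"
    using sorted assms(1,2) by (simp_all add: C_def is_system_def)
  obtain w where w: "counterexample C w" "\<And>u. u < w \<Longrightarrow> \<not> counterexample C u"
    using assms(3) exists_least_iff[of "counterexample C"] by (auto simp: canonical_def C_def)
  interpret least_counterexample C w
    using sys w by unfold_locales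
  have top: "last C \<le> w" and v: "c5 - c4 \<le> w - c5"
    using counterexample_ge_appended_coin[OF sys can w(1)] c6 last by auto
  obtain a where a: "a \<in> set C" "opt C (w - a) + 1 = opt C w"
    using opt_remove_coin[OF sys] w(1) by (metis counterexample_def)
  have "a < c5" "w - c5 < a"
    using optimal_coin_less_top[OF a top] minus_optimal_coin_less_top[OF a top] top last by auto
  interpret five_coin_shift c2 c3 c4 c5 "c5 - c4" "w - c5"
    using sorted v canonical_append_coin_shift[OF sys6 can] c6 last
    by unfold_locales (auto simp: C_def)
  obtain \<beta> where \<beta>: "\<beta> \<in> set C" "\<beta> \<le> w - c5" "grd C (c5 + (w - c5) - a) = 1 + grd C (w - c5 - \<beta>)"
    by (rule greedy_match[folded C_def, OF a(1) \<open>a < c5\<close> \<open>w - c5 < a\<close>])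
  have "grd C (w - a) \<le> grd C (w - c5 - \<beta>)"
    using grd_minus_optimal_coin_le[OF a top \<beta>(1)] \<beta>(2) last by simp
  then show False
    using \<beta>(3) top last by simp
qed

end
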